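(* Let $\mathcal A$ be a GRA over $(\mathbb N;=)$ and $\mathcal B$ a one-register GURA over $(\mathbb N;=)$ over the same alphabet. Let $S=(\ell^{\mathcal A}(\mathbf d),C)$ be a synchronized configuration such that $C$ is essentially coverable, and let $a\ne b$ with $a,b\in\mathrm{supp}(C)$ and $a\equiv_S b$. Then $S$ reaches a bad synchronized configuration in $(\mathcal S,\Rightarrow)$ if and only if $S'=(\ell^{\mathcal A}(\mathbf d),(C\setminus C_b^+)\cup C_b^-)$ reaches a bad synchronized configuration in $(\mathcal S,\Rightarrow)$.
   Context: A GRA over $(\mathbb N;=)$ and finite alphabet $\Sigma$ is $(\mathcal R,\mathcal L,\ell_{init},\mathcal L_{acc},E)$ with finite registers $\mathcal R$, locations, initial location, accepting locations, and finite edges $(\ell,\sigma,\phi,\ell')$ where $\phi$ is a Boolean combination of equalities $t_1=t_2$, $t_i\in\{\#\}\cup\{r,\dot r:r\in\mathcal R\}$, interpreted on $(\mathbf u,d,\mathbf v)$ (current valuation in $\mathbb N_\bot^{\mathcal R}$ with $\mathbb N_\bot=\mathbb N\cup\{\bot\}$, input datum, next valuation); next register values not fixed by $\phi$ may be guessed subject to $\phi$. States are $\ell(\mathbf u)$; the initial state has all registers $\bot$; $\ell(\mathbf u)\xrightarrow{\sigma,d}\ell'(\mathbf u')$ if some edge $(\ell,\sigma,\phi,\ell')$ has $(\mathbf u,d,\mathbf u')\models\phi$. A GURA is a GRA in which each data word has at most one run from the initial state ending in an accepting location. For $\mathcal B$ (one register): a configuration is a (possibly infinite) set of states $\ell(u)$,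 $u\in\mathbb N_\bot$; $\mathrm{succ}(C,(\sigma,d))$ is the set of states reached by one $(\sigma,d)$-transition from states of $C$, extended to words; $C$ is accepting if it contains a state with accepting location; reachable if $C=\mathrm{succ}(\{\ell_{init}(\bot)\},w)$ for some data word $w$; coverable if contained in a reachable configuration; essentially coverable if every subset of at most two of its states is coverable. $\mathrm{supp}(C)$ is the set of $d\in\mathbb N$ such that either $\ell(d)\in C$ for some $\ell$ with $\{e:\ell(e)\in C\}$ finite, or $\ell(d)\notin C$ for some $\ell$ with $\{e:\ell(e)\in C\}$ cofinite. $C_d^+=\{\ell(d):\ell(d)\in C,\ \{e\in\mathbb N:\ell(e)\in C\}\text{ finite}\}$, $C_d^-=\{\ell(d):\ell(d)\notin C,\ \{e\in\mathbb N:\ell(e)\in C\}\text{ infinite}\}$. A synchronized configuration is a pair $(\ell(\mathbf d),C)$ of a state of $\mathcal A$ and a configuration of $\mathcal B$; $\mathcal S$ is their set; $(\ell(\mathbf d),C)\Rightarrow(\ell'(\mathbf d'),C')$ iff for some $(\sigma,d)$, $\ell(\mathbf d)\xrightarrow{\sigma,d}_{\mathcal A}\ell'(\mathbf d')$ and $\mathrm{succ}_{\mathcal B}(C,(\sigma,d))=C'$; "reaches" means via a finite $\Rightarrow$-path. $(\ell(\mathbf d),C)$ is bad if $\ell\in\mathcal L^{\mathcal A}_{acc}$ and $C$ is non-accepting. For $S=(\ell(\mathbf d),C)$ and $a,b\in\mathrm{supp}(C)$, $a\equiv_S b$ (indistinguishable) means $a,b$ do not occur in $\mathbf d$ and $\{\ell:\ell(a)\in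 C\}=\{\ell:\ell(b)\in C\}$. *)

theory Defs
  imports Main
begin

text \<open>Register values are in N_bot, modelled as nat option (None = bot).
  Registers are given by a finite type 'r; locations by an explicit finite set;
  the finite alphabet is a finite type 'a.\<close>

datatype 'r gterm = Hash | Cur 'r | Nxt 'r

datatype 'r guard =
    GTrue
  | GEq "'r gterm" "'r gterm"
  | GNot "'r guard"
  | GAnd "'r guard" "'r guard"
  | GOr "'r guard" "'r guard"

fun eval_term :: "('r \<Rightarrow> nat option) \<Rightarrow> nat \<Rightarrow> ('r \<Rightarrow> nat option) \<Rightarrow> 'r gterm \<Rightarrow> nat option" where
  "eval_term u d v Hash = Some d"
| "eval_term u d v (Cur r) = u r"
| "eval_term u d v (Nxt r) = v r"

fun sat :: "('r \<Rightarrow> nat option) \<Rightarrow> nat \<Rightarrow> ('r \<Rightarrow> nat option) \<Rightarrow> 'r guard \<Rightarrow> bool" where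
  "sat u d v GTrue = True"
| "sat u d v (GEq t1 t2) = (eval_term u d v t1 = eval_term u d v t2)"
| "sat u d v (GNot f) = (\<not> sat u d v f)"
| "sat u d v (GAnd f g) = (sat u d v f \<and> sat u d v g)"
| "sat u d v (GOr f g) = (sat u d v f \<or> sat u d v g)"

record ('r, 'l, 'a) gra =
  locs :: "'l set"
  init :: 'l
  acc :: "'l set"
  edges :: "('l \<times> 'a \<times> 'r guard \<times> 'l) set"

definition wf_gra :: "('r::finite, 'l, 'a::finite) gra \<Rightarrow> bool" where
  "wf_gra A \<longleftrightarrow> finite (locs A) \<and> init A \<in> locs A \<and> acc A \<subseteq> locs A
     \<and> finite (edges A) \<and> (\<forall>(l, \<sigma>, \<phi>, l') \<in> edges A. l \<in> locs A \<and> l' \<in> locs A)"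

type_synonym ('l, 'r) state = "'l \<times> ('r \<Rightarrow> nat option)"

definition step :: "('r, 'l, 'a) gra \<Rightarrow> ('l, 'r) state \<Rightarrow> 'a \<times> nat \<Rightarrow> ('l, 'r) state \<Rightarrow> bool" where
  "step A s x s' \<longleftrightarrow> (\<exists>\<phi>. (fst s, fst x, \<phi>, fst s') \<in> edges A \<and> sat (snd s) (snd x) (snd s') \<phi>)"

definition init_state :: "('r, 'l, 'a) gra \<Rightarrow> ('l, 'r) state" where
  "init_state A = (init A, (\<lambda>_. None))"

definition is_run :: "('r, 'l, 'a) gra \<Rightarrow> ('a \<times> nat) list \<Rightarrow> ('l, 'r) state list \<Rightarrow> bool" where
  "is_run A w ss \<longleftrightarrow> length ss = Suc (length w) \<and> ss ! 0 = init_state A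
     \<and> (\<forall>i < length w. step A (ss ! i) (w ! i) (ss ! Suc i))"

definition gura :: "('r::finite, 'l, 'a::finite) gra \<Rightarrow> bool" where
  "gura A \<longleftrightarrow> wf_gra A \<and>
     (\<forall>w ss ss'. is_run A w ss \<and> fst (last ss) \<in> acc A \<and> is_run A w ss' \<and> fst (last ss') \<in> acc A
        \<longrightarrow> ss = ss')"

text \<open>A state l(u) of B with u in N_bot is the pair (l, u).\<close>
type_synonym 'l config = "('l \<times> nat option) set"

definition succ1 :: "(unit, 'l, 'a) gra \<Rightarrow> 'l config \<Rightarrow> 'a \<times> nat \<Rightarrow> 'l config" where
  "succ1 B C x = {(l', v'). \<exists>(l, v) \<in> C. step B (l, \<lambda>_. v) x (l', \<lambda>_. v')}"

definition succ_word :: "(unit, 'l, 'a) gra \<Rightarrow> 'l config \<Rightarrow> ('a \<times> nat) list \<Rightarrow> 'l config" where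
  "succ_word B C w = foldl (succ1 B) C w"

definition accepting_config :: "(unit, 'l, 'a) gra \<Rightarrow> 'l config \<Rightarrow> bool" where
  "accepting_config B C \<longleftrightarrow> (\<exists>(l, v) \<in> C. l \<in> acc B)"

definition reachable_config :: "(unit, 'l, 'a) gra \<Rightarrow> 'l config \<Rightarrow> bool" where
  "reachable_config B C \<longleftrightarrow> (\<exists>w. C = succ_word B {(init B, None)} w)"

definition coverable :: "(unit, 'l, 'a) gra \<Rightarrow> 'l config \<Rightarrow> bool" where
  "coverable B C \<longleftrightarrow> (\<exists>D. reachable_config B D \<and> C \<subseteq> D)"

definition ess_coverable :: "(unit, 'l, 'a) gra \<Rightarrow> 'l config \<Rightarrow> bool" where
  "ess_coverable B C \<longleftrightarrow> (\<forall>X \<subseteq> C. finite X \<and> card X \<le> 2 \<longrightarrow> coverable B X)"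

definition supp :: "(unit, 'l, 'a) gra \<Rightarrow> 'l config \<Rightarrow> nat set" where
  "supp B C = {d. (\<exists>l \<in> locs B. (l, Some d) \<in> C \<and> finite {e. (l, Some e) \<in> C})
                \<or> (\<exists>l \<in> locs B. (l, Some d) \<notin> C \<and> finite (- {e. (l, Some e) \<in> C}))}"

definition Cplus :: "(unit, 'l, 'a) gra \<Rightarrow> 'l config \<Rightarrow> nat \<Rightarrow> 'l config" where
  "Cplus B C d = {(l, Some d) | l. l \<in> locs B \<and> (l, Some d) \<in> C \<and> finite {e. (l, Some e) \<in> C}}"

definition Cminus :: "(unit, 'l, 'a) gra \<Rightarrow> 'l config \<Rightarrow> nat \<Rightarrow> 'l config" where
  "Cminus B C d = {(l, Some d) | l. l \<in> locs B \<and> (l, Some d) \<notin> C \<and> infinite {e. (l, Some e) \<in> C}}"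

type_synonym ('l1, 'r, 'l2) sync = "('l1, 'r) state \<times> 'l2 config"

definition is_sync :: "('r, 'l1, 'a) gra \<Rightarrow> (unit, 'l2, 'a) gra \<Rightarrow> ('l1, 'r, 'l2) sync \<Rightarrow> bool" where
  "is_sync A B S \<longleftrightarrow> fst (fst S) \<in> locs A \<and> (\<forall>(l, v) \<in> snd S. l \<in> locs B)"

definition sync_step :: "('r, 'l1, 'a) gra \<Rightarrow> (unit, 'l2, 'a) gra
    \<Rightarrow> ('l1, 'r, 'l2) sync \<Rightarrow> ('l1, 'r, 'l2) sync \<Rightarrow> bool" where
  "sync_step A B S S' \<longleftrightarrow> is_sync A B S \<and> is_sync A B S' \<and>
     (\<exists>\<sigma> d. step A (fst S) (\<sigma>, d) (fst S') \<and> snd S' = succ1 B (snd S) (\<sigma>, d))"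

definition bad :: "('r, 'l1, 'a) gra \<Rightarrow> (unit, 'l2, 'a) gra \<Rightarrow> ('l1, 'r, 'l2) sync \<Rightarrow> bool" where
  "bad A B S \<longleftrightarrow> fst (fst S) \<in> acc A \<and> \<not> accepting_config B (snd S)"

definition reaches_bad :: "('r, 'l1, 'a) gra \<Rightarrow> (unit, 'l2, 'a) gra \<Rightarrow> ('l1, 'r, 'l2) sync \<Rightarrow> bool" where
  "reaches_bad A B S \<longleftrightarrow> (\<exists>S'. (sync_step A B)\<^sup>*\<^sup>* S S' \<and> bad A B S')"

definition indist :: "(unit, 'l2, 'a) gra \<Rightarrow> ('l1, 'r, 'l2) sync \<Rightarrow> nat \<Rightarrow> nat \<Rightarrow> bool" where
  "indist B S a b \<longleftrightarrow> a \<in> supp B (snd S) \<and> b \<in> supp B (snd S)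
     \<and> Some a \<notin> range (snd (fst S)) \<and> Some b \<notin> range (snd (fst S))
     \<and> {l. (l, Some a) \<in> snd S} = {l. (l, Some b) \<in> snd S}"

end

theory Submission
  imports Defs "HOL-Combinatorics.Transposition"
begin

(* Both sides of the equivalence say that some data word w is accepted by A from l(dd) but
   from no state of the B-configuration.  Such "witnesses" are closed under renamings of data
   that fix the values of dd, and acceptance by one-register states is equivariant.  Since B is
   unambiguous and C is essentially coverable, no word is accepted from two distinct states of C;
   consequently a datum that does not occur in w is accepted along w from no state of a row of
   C with two or more elements.

   Given a witness w for C, exchanging b with a datum c fresh for w and dd gives a witness for
   C', unless (l, c) is in C and w is accepted from (l, b) for some l.  If this obstruction
   occurs for w and c and also for the (a b)-swap of w and a second fresh datum c', then w is
   accepted from (l, b) and from (l', a), and renaming b to c and a to c' yields two distinct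
   states of C accepting the same word.  Conversely, from a witness for C' one exchanges b with
   a datum fresh for the word, dd, and all finite rows of C. *)

fun run_from :: "('r, 'l, 'a) gra \<Rightarrow> ('l, 'r) state \<Rightarrow> ('a \<times> nat) list \<Rightarrow> ('l, 'r) state list \<Rightarrow> bool" where
  "run_from A q [] ss \<longleftrightarrow> ss = [q]"
| "run_from A q (x # w) ss \<longleftrightarrow> (\<exists>q' ss'. ss = q # ss' \<and> step A q x q' \<and> run_from A q' w ss')"

definition accepts_from :: "('r, 'l, 'a) gra \<Rightarrow> ('l, 'r) state \<Rightarrow> ('a \<times> nat) list \<Rightarrow> bool" where
  "accepts_from A q w \<longleftrightarrow> (\<exists>ss. run_from A q w ss \<and> fst (last ss) \<in> acc A)"

lemma run_from_ConsI: "step A q x q' \<Longrightarrow> run_from A q' w ss \<Longrightarrow> run_from A q (x # w) (q # ss)"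
  by (simp only: run_from.simps) blast

lemma run_from_length: "run_from A q w ss \<Longrightarrow> length ss = Suc (length w)"
  by (induction w arbitrary: q ss) auto

lemma run_from_hd: "run_from A q w ss \<Longrightarrow> ss \<noteq> [] \<and> hd ss = q"
  by (cases w) auto

lemma run_from_nth_0: "run_from A q w ss \<Longrightarrow> ss ! 0 = q"
  using run_from_hd by (metis hd_conv_nth)

lemma run_from_append:
  "run_from A q u ss \<Longrightarrow> run_from A (last ss) w ts \<Longrightarrow> run_from A q (u @ w) (ss @ tl ts)"
proof (induction u arbitrary: q ss)
  case Nil
  then show ?case using run_from_hd[of A q w ts] by (cases ts) auto
next
  case (Cons x u)
  then obtain q' ss' where ss: "ss = q # ss'" "step A q x q'" "run_from A q' u ss'" by auto
  then have "last ss = last ss'" using run_from_hd[of A q' u ss'] by simp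
  then have "run_from A q' (u @ w) (ss' @ tl ts)" using Cons ss by simp
  then show ?case unfolding ss(1) append_Cons by (rule run_from_ConsI[OF ss(2)])
qed

lemma run_from_append_last:
  "run_from A q u ss \<Longrightarrow> run_from A (last ss) w ts \<Longrightarrow> last (ss @ tl ts) = last ts"
  using run_from_hd[of A q u ss] run_from_hd[of A "last ss" w ts] by (cases ts) auto

lemma run_from_append_nth:
  "run_from A q u ss \<Longrightarrow> (ss @ ts) ! length u = last ss"
  using run_from_length[of A q u ss] by (cases ss rule: rev_cases) (auto simp: nth_append)

lemma run_from_iff_nth:
  "run_from A q w ss \<longleftrightarrow> length ss = Suc (length w) \<and> ss ! 0 = q
     \<and> (\<forall>i < length w. step A (ss ! i) (w ! i) (ss ! Suc i))"
proof (induction w arbitrary: q ss)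
  case Nil
  then show ?case by (cases ss) auto
next
  case (Cons x w)
  show ?case
  proof (cases ss)
    case (Cons q0 ss')
    have "run_from A q (x # w) ss \<longleftrightarrow> q0 = q \<and> step A q x (ss' ! 0) \<and> run_from A (ss' ! 0) w ss'"
      using Cons run_from_nth_0[of A _ w ss'] by (auto simp del: split_paired_Ex)
    then show ?thesis using Cons.IH[where q = "ss' ! 0" and ss = ss'] Cons
      by (auto simp: All_less_Suc2)
  qed simp
qed

lemma is_run_iff_run_from: "is_run A w ss \<longleftrightarrow> run_from A (init_state A) w ss"
  unfolding is_run_def run_from_iff_nth ..

section \<open>Renaming data\<close>

abbreviation rename_word :: "(nat \<Rightarrow> nat) \<Rightarrow> ('a \<times> nat) list \<Rightarrow> ('a \<times> nat) list" where
  "rename_word \<pi> w \<equiv> map (apsnd \<pi>) w"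

abbreviation data :: "('a \<times> nat) list \<Rightarrow> nat set" where
  "data w \<equiv> snd ` set w"

lemma data_rename_word: "data (rename_word \<pi> w) = \<pi> ` data w"
  by force

definition rename_state :: "(nat \<Rightarrow> nat) \<Rightarrow> ('l, 'r) state \<Rightarrow> ('l, 'r) state" where
  "rename_state \<pi> q = (fst q, map_option \<pi> \<circ> snd q)"

lemma eval_term_rename:
  "eval_term (map_option \<pi> \<circ> u) (\<pi> d) (map_option \<pi> \<circ> v) t = map_option \<pi> (eval_term u d v t)"
  by (cases t) simp_all

lemma sat_rename:
  "inj \<pi> \<Longrightarrow> sat (map_option \<pi> \<circ> u) (\<pi> d) (map_option \<pi> \<circ> v) \<phi> \<longleftrightarrow> sat u d v \<phi>"
  by (induction \<phi>) (simp_all add: eval_term_rename option.inj_map inj_eq)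

lemma step_rename:
  "inj \<pi> \<Longrightarrow> step A q (\<sigma>, d) q' \<Longrightarrow> step A (rename_state \<pi> q) (\<sigma>, \<pi> d) (rename_state \<pi> q')"
  unfolding step_def rename_state_def by (simp add: sat_rename)

lemma run_from_rename:
  "inj \<pi> \<Longrightarrow> run_from A q w ss
     \<Longrightarrow> run_from A (rename_state \<pi> q) (rename_word \<pi> w) (map (rename_state \<pi>) ss)"
proof (induction w arbitrary: q ss)
  case (Cons x w)
  then obtain q' ss' where ss: "ss = q # ss'" "step A q x q'" "run_from A q' w ss'" by auto
  have "step A (rename_state \<pi> q) (apsnd \<pi> x) (rename_state \<pi> q')"
    using step_rename[OF Cons.prems(1)] \<open>step A q x q'\<close> by (cases x) simp
  moreover have "run_from A (rename_state \<pi> q') (rename_word \<pi> w) (map (rename_state \<pi>) ss')"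
    using Cons.IH Cons.prems(1) ss(3) .
  ultimately show ?case unfolding ss(1) list.map by (rule run_from_ConsI)
qed simp

lemma accepts_from_rename:
  assumes "inj \<pi>" "accepts_from A q w"
  shows "accepts_from A (rename_state \<pi> q) (rename_word \<pi> w)"
proof -
  obtain ss where ss: "run_from A q w ss" "fst (last ss) \<in> acc A"
    using assms(2) unfolding accepts_from_def by blast
  then have "fst (last (map (rename_state \<pi>) ss)) \<in> acc A"
    using run_from_hd[OF ss(1)] by (simp add: last_map rename_state_def)
  then show ?thesis using run_from_rename[OF assms(1) ss(1)] unfolding accepts_from_def by blast
qed

lemma accepts_from_rename_fixing:
  assumes "inj \<pi>" "\<And>x. Some x \<in> range u \<Longrightarrow> \<pi> x = x" "accepts_from A (l, u) w"
  shows "accepts_from A (l, u) (rename_word \<pi> w)"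
proof -
  have "map_option \<pi> \<circ> u = u"
  proof
    fix r show "(map_option \<pi> \<circ> u) r = u r"
    proof (cases "u r")
      case (Some x)
      then have "\<pi> x = x" using assms(2) by (metis rangeI)
      with Some show ?thesis by simp
    qed simp
  qed
  then show ?thesis
    using accepts_from_rename[OF assms(1,3)] by (simp add: rename_state_def)
qed

definition reg_state :: "'l \<times> nat option \<Rightarrow> ('l, unit) state" where
  "reg_state s = (fst s, \<lambda>_. snd s)"

definition reg_accepts :: "(unit, 'l, 'a) gra \<Rightarrow> 'l \<times> nat option \<Rightarrow> ('a \<times> nat) list \<Rightarrow> bool" where
  "reg_accepts B s w \<longleftrightarrow> accepts_from B (reg_state s) w"

lemma reg_state_eq_iff [simp]: "reg_state s = reg_state t \<longleftrightarrow> s = t"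
  unfolding reg_state_def by (cases s, cases t) (auto simp: fun_eq_iff)

lemma reg_state_surj: "q = reg_state (fst q, snd q ())"
  unfolding reg_state_def by simp

lemma reg_accepts_rename:
  "inj \<pi> \<Longrightarrow> reg_accepts B (l, v) w \<Longrightarrow> reg_accepts B (l, map_option \<pi> v) (rename_word \<pi> w)"
  unfolding reg_accepts_def
  using accepts_from_rename[of \<pi> B "reg_state (l, v)" w] by (simp add: reg_state_def rename_state_def o_def)

lemma rename_word_transpose_involutory [simp]:
  "rename_word (transpose x y) (rename_word (transpose x y) w) = w"
  by (induction w) auto

lemma reg_accepts_transpose_iff:
  "reg_accepts B (l, v) (rename_word (transpose x y) w)
     \<longleftrightarrow> reg_accepts B (l, map_option (transpose x y) v) w"
proof
  have inv: "map_option (transpose x y) (map_option (transpose x y) v) = v"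
    by (cases v) simp_all
  show "reg_accepts B (l, map_option (transpose x y) v) w"
    if "reg_accepts B (l, v) (rename_word (transpose x y) w)"
    using reg_accepts_rename[OF inj_transpose[of x y] that] inv
    by (simp only: rename_word_transpose_involutory)
  show "reg_accepts B (l, v) (rename_word (transpose x y) w)"
    if "reg_accepts B (l, map_option (transpose x y) v) w"
    using reg_accepts_rename[OF inj_transpose[of x y] that] inv
    by (simp only: rename_word_transpose_involutory)
qed

lemma reg_accepts_fresh:
  assumes "x \<notin> data w" "y \<notin> data w" "reg_accepts B (l, Some x) w"
  shows "reg_accepts B (l, Some y) w"
proof -
  have "rename_word (transpose x y) w = w"
  proof (rule map_idI)
    fix p assume "p \<in> set w"
    then have "snd p \<noteq> x" "snd p \<noteq> y" using assms(1,2) by force+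
    then show "apsnd (transpose x y) p = p" by (cases p) simp
  qed
  then show ?thesis using reg_accepts_transpose_iff[of B l "Some y" x y w] assms(3) by simp
qed

lemma mem_succ1_iff: "t \<in> succ1 B C x \<longleftrightarrow> (\<exists>s\<in>C. step B (reg_state s) x (reg_state t))"
  unfolding succ1_def reg_state_def by (cases t) force

lemma mem_succ_word_iff:
  "t \<in> succ_word B C w
     \<longleftrightarrow> (\<exists>s\<in>C. \<exists>ss. run_from B (reg_state s) w ss \<and> last ss = reg_state t)"
proof (induction w arbitrary: C)
  case Nil
  then show ?case by (simp add: succ_word_def)
next
  case (Cons x w)
  have "t \<in> succ_word B C (x # w)
      \<longleftrightarrow> (\<exists>s'\<in>succ1 B C x. \<exists>ss. run_from B (reg_state s') w ss \<and> last ss = reg_state t)"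
    using Cons.IH by (simp add: succ_word_def)
  also have "\<dots> \<longleftrightarrow> (\<exists>s\<in>C. \<exists>s'. step B (reg_state s) x (reg_state s')
             \<and> (\<exists>ss. run_from B (reg_state s') w ss \<and> last ss = reg_state t))"
    by (simp only: Bex_def mem_succ1_iff) blast
  also have "\<dots> \<longleftrightarrow> (\<exists>s\<in>C. \<exists>ss. run_from B (reg_state s) (x # w) ss \<and> last ss = reg_state t)"
  proof (intro bex_cong refl iffI)
    fix s
    assume "\<exists>s'. step B (reg_state s) x (reg_state s')
             \<and> (\<exists>ss. run_from B (reg_state s') w ss \<and> last ss = reg_state t)"
    then obtain s' ss where "step B (reg_state s) x (reg_state s')" "run_from B (reg_state s') w ss"
      "last ss = reg_state t" by blast
    then show "\<exists>ss. run_from B (reg_state s) (x # w) ss \<and> last ss = reg_state t"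
      using run_from_hd by (metis run_from_ConsI last_ConsR)
  next
    fix s
    assume "\<exists>ss. run_from B (reg_state s) (x # w) ss \<and> last ss = reg_state t"
    then obtain q' ss where "step B (reg_state s) x q'" "run_from B q' w ss"
      "last (reg_state s # ss) = reg_state t" by (auto simp del: split_paired_Ex)
    then show "\<exists>s'. step B (reg_state s) x (reg_state s')
             \<and> (\<exists>ss. run_from B (reg_state s') w ss \<and> last ss = reg_state t)"
      using run_from_hd reg_state_surj by (metis last_ConsR)
  qed
  finally show ?case .
qed

lemma accepting_succ_word_iff:
  "accepting_config B (succ_word B C w) \<longleftrightarrow> (\<exists>s\<in>C. reg_accepts B s w)"
proof
  assume "accepting_config B (succ_word B C w)"
  then obtain t where "t \<in> succ_word B C w" "fst t \<in> acc B"
    unfolding accepting_config_def by auto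
  moreover from this(1) obtain s ss where "s \<in> C" "run_from B (reg_state s) w ss" "last ss = reg_state t"
    unfolding mem_succ_word_iff by blast
  ultimately have "fst (last ss) \<in> acc B" by (simp add: reg_state_def)
  with \<open>s \<in> C\<close> \<open>run_from B (reg_state s) w ss\<close> show "\<exists>s\<in>C. reg_accepts B s w"
    unfolding reg_accepts_def accepts_from_def by blast
next
  assume "\<exists>s\<in>C. reg_accepts B s w"
  then obtain s ss where "s \<in> C" "run_from B (reg_state s) w ss" "fst (last ss) \<in> acc B"
    unfolding reg_accepts_def accepts_from_def by blast
  moreover have "last ss = reg_state (fst (last ss), snd (last ss) ())"
    by (rule reg_state_surj)
  ultimately show "accepting_config B (succ_word B C w)"
    unfolding accepting_config_def by (fastforce simp: mem_succ_word_iff)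
qed

section \<open>Bad synchronized configurations\<close>

lemma is_sync_step:
  assumes "wf_gra A" "wf_gra B" "is_sync A B (q, C)" "step A q x q'"
  shows "is_sync A B (q', succ1 B C x)"
proof -
  have "fst q' \<in> locs A"
    using assms(1,4) unfolding wf_gra_def step_def by fastforce
  moreover have "l \<in> locs B" if "(l, v) \<in> succ1 B C x" for l v
    using assms(2) that unfolding wf_gra_def succ1_def step_def by fastforce
  ultimately show ?thesis unfolding is_sync_def by auto
qed

lemma sync_steps_imp_run:
  "(sync_step A B)\<^sup>*\<^sup>* S S'
     \<Longrightarrow> \<exists>w ss. run_from A (fst S) w ss \<and> last ss = fst S' \<and> snd S' = succ_word B (snd S) w"
proof (induction rule: converse_rtranclp_induct)
  case base
  show ?case by (rule exI[of _ "[]"]) (simp add: succ_word_def)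
next
  case (step S S1)
  then obtain w ss where run: "run_from A (fst S1) w ss" "last ss = fst S'"
    "snd S' = succ_word B (snd S1) w"
    by blast
  obtain \<sigma> d where x: "step A (fst S) (\<sigma>, d) (fst S1)" "snd S1 = succ1 B (snd S) (\<sigma>, d)"
    using step.hyps(1) unfolding sync_step_def by blast
  have "run_from A (fst S) ((\<sigma>, d) # w) (fst S # ss)"
    using x(1) run(1) by (rule run_from_ConsI)
  moreover have "last (fst S # ss) = fst S'"
    using run(1,2) run_from_hd by fastforce
  moreover have "snd S' = succ_word B (snd S) ((\<sigma>, d) # w)"
    using run(3) x(2) by (simp add: succ_word_def)
  ultimately show ?case by blast
qed

lemma run_imp_sync_steps:
  "wf_gra A \<Longrightarrow> wf_gra B \<Longrightarrow> is_sync A B (q, C) \<Longrightarrow> run_from A q w ss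
     \<Longrightarrow> (sync_step A B)\<^sup>*\<^sup>* (q, C) (last ss, succ_word B C w)"
proof (induction w arbitrary: q C ss)
  case (Cons x w)
  then obtain q' ss' where ss: "ss = q # ss'" "step A q x q'" "run_from A q' w ss'" by auto
  have sync': "is_sync A B (q', succ1 B C x)"
    using is_sync_step[OF Cons.prems(1-3) ss(2)] .
  then have "sync_step A B (q, C) (q', succ1 B C x)"
    using Cons.prems(3) ss(2) unfolding sync_step_def by (cases x) auto
  moreover have "(sync_step A B)\<^sup>*\<^sup>* (q', succ1 B C x) (last ss', succ_word B (succ1 B C x) w)"
    using Cons.IH[OF Cons.prems(1,2) sync' ss(3)] .
  ultimately show ?case
    using ss(1) run_from_hd[OF ss(3)] by (simp add: succ_word_def converse_rtranclp_into_rtranclp)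
qed (simp add: succ_word_def)

lemma reaches_bad_iff:
  assumes "wf_gra A" "wf_gra B" "is_sync A B (q, C)"
  shows "reaches_bad A B (q, C) \<longleftrightarrow> (\<exists>w. accepts_from A q w \<and> (\<forall>s\<in>C. \<not> reg_accepts B s w))"
proof
  assume "reaches_bad A B (q, C)"
  then obtain S' where "(sync_step A B)\<^sup>*\<^sup>* (q, C) S'" "bad A B S'"
    unfolding reaches_bad_def by blast
  moreover from sync_steps_imp_run[OF this(1)] obtain w ss where
    "run_from A q w ss" "last ss = fst S'" "snd S' = succ_word B C w"
    by auto
  ultimately have "run_from A q w ss" "fst (last ss) \<in> acc A"
    "\<not> accepting_config B (succ_word B C w)"
    unfolding bad_def by auto
  then show "\<exists>w. accepts_from A q w \<and> (\<forall>s\<in>C. \<not> reg_accepts B s w)"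
    unfolding accepts_from_def accepting_succ_word_iff by blast
next
  assume "\<exists>w. accepts_from A q w \<and> (\<forall>s\<in>C. \<not> reg_accepts B s w)"
  then obtain w ss where "run_from A q w ss" "fst (last ss) \<in> acc A" "\<forall>s\<in>C. \<not> reg_accepts B s w"
    unfolding accepts_from_def by blast
  then have "(sync_step A B)\<^sup>*\<^sup>* (q, C) (last ss, succ_word B C w)"
    "bad A B (last ss, succ_word B C w)"
    using run_imp_sync_steps[OF assms] by (auto simp: bad_def accepting_succ_word_iff)
  then show "reaches_bad A B (q, C)"
    unfolding reaches_bad_def by blast
qed

section \<open>Unambiguity on essentially coverable configurations\<close>

lemma reachable_config_reg_accepts_unique:
  assumes "gura B" "reachable_config B D" "s \<in> D" "t \<in> D" "reg_accepts B s w" "reg_accepts B t w"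
  shows "s = t"
proof -
  obtain u where D: "D = succ_word B {(init B, None)} u"
    using assms(2) unfolding reachable_config_def by blast
  have accepting_run: "\<exists>ss. is_run B (u @ w) ss \<and> fst (last ss) \<in> acc B \<and> ss ! length u = reg_state r"
    if r: "r \<in> D" and r_accepts: "reg_accepts B r w" for r
  proof -
    have "reg_state (init B, None) = init_state B"
      by (simp add: reg_state_def init_state_def)
    moreover have "r \<in> succ_word B {(init B, None)} u"
      using r D by simp
    ultimately obtain ss where ss: "run_from B (init_state B) u ss" "last ss = reg_state r"
      unfolding mem_succ_word_iff by auto
    obtain ts where ts: "run_from B (last ss) w ts" "fst (last ts) \<in> acc B"
      using r_accepts ss(2) unfolding reg_accepts_def accepts_from_def by auto
    have "is_run B (u @ w) (ss @ tl ts)"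
      unfolding is_run_iff_run_from using ss(1) ts(1) by (rule run_from_append)
    moreover have "last (ss @ tl ts) = last ts"
      using ss(1) ts(1) by (rule run_from_append_last)
    moreover have "(ss @ tl ts) ! length u = reg_state r"
      using run_from_append_nth[OF ss(1)] ss(2) by simp
    ultimately show ?thesis using ts(2) by metis
  qed
  obtain ss where "is_run B (u @ w) ss" "fst (last ss) \<in> acc B" "ss ! length u = reg_state s"
    using accepting_run[OF assms(3,5)] by blast
  moreover obtain ts where "is_run B (u @ w) ts" "fst (last ts) \<in> acc B" "ts ! length u = reg_state t"
    using accepting_run[OF assms(4,6)] by blast
  ultimately show "s = t"
    using assms(1) unfolding gura_def by (metis reg_state_eq_iff)
qed

lemma ess_coverable_reg_accepts_unique:
  assumes "gura B" "ess_coverable B C" "s \<in> C" "t \<in> C" "reg_accepts B s w" "reg_accepts B t w"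
  shows "s = t"
proof -
  have "card {s, t} \<le> 2" by (cases "s = t") simp_all
  then have "coverable B {s, t}"
    using assms(2-4) unfolding ess_coverable_def by simp
  then obtain D where "reachable_config B D" "s \<in> D" "t \<in> D"
    unfolding coverable_def by blast
  then show ?thesis using reachable_config_reg_accepts_unique assms(1,5,6) by blast
qed

section \<open>Indistinguishable data\<close>

(* P is acceptance by A from its current state and D the set of data held in its registers. *)
locale indistinguishable_data =
  fixes B :: "(unit, 'l, 'a::finite) gra" and C :: "'l config" and a b :: nat
    and P :: "('a \<times> nat) list \<Rightarrow> bool" and D :: "nat set"
  assumes gura: "gura B"
    and ess_coverable: "ess_coverable B C"
    and locs_C: "(l, v) \<in> C \<Longrightarrow> l \<in> locs B"
    and finite_D: "finite D"
    and a_notin_D: "a \<notin> D" and b_notin_D: "b \<notin> D" and a_neq_b: "a \<noteq> b"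
    and same_rows: "(l, Some a) \<in> C \<longleftrightarrow> (l, Some b) \<in> C"
    and P_rename: "inj \<pi> \<Longrightarrow> (\<And>x. x \<in> D \<Longrightarrow> \<pi> x = x) \<Longrightarrow> P w \<Longrightarrow> P (rename_word \<pi> w)"
begin

abbreviation row :: "'l \<Rightarrow> nat set" where
  "row l \<equiv> {e. (l, Some e) \<in> C}"

definition C' :: "'l config" where
  "C' = (C - Cplus B C b) \<union> Cminus B C b"

definition witness :: "'l config \<Rightarrow> ('a \<times> nat) list \<Rightarrow> bool" where
  "witness K w \<longleftrightarrow> P w \<and> (\<forall>s\<in>K. \<not> reg_accepts B s w)"

lemma mem_C'_other: "v \<noteq> Some b \<Longrightarrow> (l, v) \<in> C' \<longleftrightarrow> (l, v) \<in> C"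
  unfolding C'_def Cplus_def Cminus_def by blast

lemma mem_C'_b: "(l, Some b) \<in> C' \<longleftrightarrow> l \<in> locs B \<and> infinite (row l)"
  unfolding C'_def Cplus_def Cminus_def by (auto dest: locs_C)

lemma locs_C': "(l, v) \<in> C' \<Longrightarrow> l \<in> locs B"
  by (cases "v = Some b") (auto simp: mem_C'_b mem_C'_other locs_C)

lemma P_transpose: "x \<notin> D \<Longrightarrow> y \<notin> D \<Longrightarrow> P w \<Longrightarrow> P (rename_word (transpose x y) w)"
  by (rule P_rename[OF inj_transpose]) (auto simp: transpose_def)

lemma no_joint_acceptance:
  assumes "reg_accepts B (l1, Some x1) w" "reg_accepts B (l2, Some x2) w"
    and "(l1, Some y1) \<in> C" "(l2, Some y2) \<in> C"
    and "x1 \<noteq> x2" "y1 \<noteq> y2" "x1 \<noteq> y2" "x2 \<noteq> y1"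
  shows False
proof -
  define \<rho> where "\<rho> = transpose y1 x1 \<circ> transpose y2 x2"
  have "inj \<rho>" unfolding \<rho>_def by (simp add: inj_compose inj_transpose)
  moreover have "\<rho> x1 = y1" "\<rho> x2 = y2"
    using assms(5-8) unfolding \<rho>_def by (auto simp: transpose_def)
  ultimately have "reg_accepts B (l1, Some y1) (rename_word \<rho> w)"
    "reg_accepts B (l2, Some y2) (rename_word \<rho> w)"
    using reg_accepts_rename[OF \<open>inj \<rho>\<close> assms(1)] reg_accepts_rename[OF \<open>inj \<rho>\<close> assms(2)]
    by simp_all
  then have "(l1, Some y1) = (l2, Some y2)"
    by (rule ess_coverable_reg_accepts_unique[OF gura ess_coverable assms(3,4)])
  then show False using assms(6) by simp
qed

lemma row_subsingleton_if_fresh_accepts: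
  assumes "reg_accepts B (l, Some x) w" "x \<notin> data w" "y \<in> row l" "z \<in> row l"
  shows "y = z"
proof (rule ccontr)
  assume "y \<noteq> z"
  obtain x1 where x1: "x1 \<notin> data w \<union> {y, z}"
    using ex_new_if_finite[OF infinite_UNIV_nat, of "data w \<union> {y, z}"] by auto
  obtain x2 where x2: "x2 \<notin> data w \<union> {y, z, x1}"
    using ex_new_if_finite[OF infinite_UNIV_nat, of "data w \<union> {y, z, x1}"] by auto
  have "reg_accepts B (l, Some x1) w" "reg_accepts B (l, Some x2) w"
    using reg_accepts_fresh[OF assms(2) _ assms(1)] x1 x2 by simp_all
  then show False
    by (rule no_joint_acceptance[OF _ _ assms(3,4)[unfolded mem_Collect_eq]])
      (use \<open>y \<noteq> z\<close> x1 x2 in auto)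
qed

lemma mem_C_transpose_iff: "(l, map_option (transpose a b) v) \<in> C \<longleftrightarrow> (l, v) \<in> C"
  using same_rows by (cases v) (auto simp: transpose_def)

lemma witness_transpose: "witness C w \<Longrightarrow> witness C (rename_word (transpose a b) w)"
  unfolding witness_def
  using P_transpose[OF a_notin_D b_notin_D] reg_accepts_transpose_iff mem_C_transpose_iff
  by (metis surj_pair)

lemma witness_C'_transpose:
  assumes "witness C u" "c \<notin> data u" "c \<notin> D" "c \<noteq> b"
    and no_collision: "\<nexists>l. (l, Some c) \<in> C \<and> reg_accepts B (l, Some b) u"
  shows "witness C' (rename_word (transpose b c) u)"
  unfolding witness_def
proof (intro conjI ballI notI)
  show "P (rename_word (transpose b c) u)"
    using P_transpose b_notin_D assms(1,3) unfolding witness_def by blast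
  fix s assume s: "s \<in> C'" "reg_accepts B s (rename_word (transpose b c) u)"
  obtain l v where s_eq: "s = (l, v)" by fastforce
  have accepts: "reg_accepts B (l, map_option (transpose b c) v) u"
    using s(2) unfolding s_eq reg_accepts_transpose_iff .
  have no_accept: "(l, v') \<notin> C \<or> \<not> reg_accepts B (l, v') u" for v'
    using assms(1) unfolding witness_def by blast
  consider "v = Some b" | "v = Some c" | "v \<noteq> Some b" "v \<noteq> Some c" by blast
  then show False
  proof cases
    case 1
    then have "infinite (row l)" using s(1) s_eq mem_C'_b by simp
    then obtain y where "y \<in> row l" using infinite_imp_nonempty by blast
    moreover have "reg_accepts B (l, Some c) u" using accepts 1 by simp
    ultimately have "row l \<subseteq> {y}"
      using row_subsingleton_if_fresh_accepts assms(2) by blast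
    then show False using \<open>infinite (row l)\<close> finite_subset by blast
  next
    case 2
    then show False using s(1) s_eq accepts mem_C'_other assms(4) no_collision by auto
  next
    case 3
    then have "map_option (transpose b c) v = v" by (cases v) auto
    then show False using s(1) s_eq accepts mem_C'_other 3(1) no_accept by metis
  qed
qed

lemma ex_witness_C'_if_witness_C:
  assumes w: "witness C w"
  shows "\<exists>w'. witness C' w'"
proof -
  obtain c where c: "c \<notin> data w \<union> D \<union> {a, b}"
    using ex_new_if_finite[OF infinite_UNIV_nat, of "data w \<union> D \<union> {a, b}"] finite_D by auto
  obtain c' where c': "c' \<notin> data w \<union> D \<union> {a, b, c}"
    using ex_new_if_finite[OF infinite_UNIV_nat, of "data w \<union> D \<union> {a, b, c}"] finite_D by auto
  let ?w_ab = "rename_word (transpose a b) w"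
  have "c' \<notin> data ?w_ab"
    using c' unfolding data_rename_word by (simp add: in_transpose_image_iff)
  consider "\<nexists>l. (l, Some c) \<in> C \<and> reg_accepts B (l, Some b) w"
    | "\<nexists>l. (l, Some c') \<in> C \<and> reg_accepts B (l, Some b) ?w_ab"
    | l1 l2 where "(l1, Some c) \<in> C" "reg_accepts B (l1, Some b) w"
        "(l2, Some c') \<in> C" "reg_accepts B (l2, Some b) ?w_ab"
    by blast
  then show ?thesis
  proof cases
    case 1
    have "witness C' (rename_word (transpose b c) w)"
      by (rule witness_C'_transpose[OF w _ _ _ 1]) (use c in auto)
    then show ?thesis ..
  next
    case 2
    have "witness C' (rename_word (transpose b c') ?w_ab)"
      by (rule witness_C'_transpose[OF witness_transpose[OF w] \<open>c' \<notin> data ?w_ab\<close> _ _ 2])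
        (use c' in auto)
    then show ?thesis ..
  next
    case 3
    have "reg_accepts B (l2, Some a) w"
      using 3(4) unfolding reg_accepts_transpose_iff by simp
    have False
      by (rule no_joint_acceptance[OF 3(2) \<open>reg_accepts B (l2, Some a) w\<close> 3(1,3)])
        (use a_neq_b c c' in auto)
    then show ?thesis ..
  qed
qed

lemma ex_witness_C_if_witness_C':
  assumes w: "witness C' w"
  shows "\<exists>w'. witness C w'"
proof -
  define F where "F = (\<Union>l\<in>{l \<in> locs B. finite (row l)}. row l)"
  have "finite (locs B)" using gura unfolding gura_def wf_gra_def by simp
  then have "finite F" unfolding F_def by simp
  then obtain c where c: "c \<notin> data w \<union> D \<union> {a, b} \<union> F"
    using ex_new_if_finite[OF infinite_UNIV_nat, of "data w \<union> D \<union> {a, b} \<union> F"] finite_D by auto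
  have no_accept: "(l, v') \<notin> C' \<or> \<not> reg_accepts B (l, v') w" for l v'
    using w unfolding witness_def by blast
  have "witness C (rename_word (transpose b c) w)"
    unfolding witness_def
  proof (intro conjI ballI notI)
    show "P (rename_word (transpose b c) w)"
      using P_transpose b_notin_D w c unfolding witness_def by blast
    fix s assume s: "s \<in> C" "reg_accepts B s (rename_word (transpose b c) w)"
    obtain l v where s_eq: "s = (l, v)" by fastforce
    have accepts: "reg_accepts B (l, map_option (transpose b c) v) w"
      using s(2) unfolding s_eq reg_accepts_transpose_iff .
    consider "v = Some b" | "v = Some c" | "v \<noteq> Some b" "v \<noteq> Some c" by blast
    then show False
    proof cases
      case 1
      then have "a \<in> row l" "b \<in> row l" using s(1) s_eq same_rows by auto
      moreover have "reg_accepts B (l, Some c) w" using accepts 1 by simp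
      ultimately show False
        using row_subsingleton_if_fresh_accepts c a_neq_b by blast
    next
      case 2
      then have "c \<in> row l" "l \<in> locs B" using s(1) s_eq locs_C by auto
      then have "infinite (row l)" using c unfolding F_def by blast
      then show False
        using accepts 2 mem_C'_b \<open>l \<in> locs B\<close> no_accept by auto
    next
      case 3
      then have "map_option (transpose b c) v = v" by (cases v) auto
      then show False using s(1) s_eq accepts mem_C'_other 3(1) no_accept by metis
    qed
  qed
  then show ?thesis by blast
qed

lemma ex_witness_C_iff_C': "(\<exists>w. witness C w) \<longleftrightarrow> (\<exists>w. witness C' w)"
  using ex_witness_C'_if_witness_C ex_witness_C_if_witness_C' by blast

end

theorem proposition6:
  fixes A :: "('r::finite, 'l1, 'a::finite) gra"
    and B :: "(unit, 'l2, 'a) gra"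
    and l :: 'l1 and dd :: "'r \<Rightarrow> nat option" and C :: "'l2 config"
    and a b :: nat
  assumes "wf_gra A"
    and "gura B"
    and "is_sync A B ((l, dd), C)"
    and "ess_coverable B C"
    and "a \<noteq> b"
    and "a \<in> supp B C" and "b \<in> supp B C"
    and "indist B ((l, dd), C) a b"
  shows "reaches_bad A B ((l, dd), C)
     \<longleftrightarrow> reaches_bad A B ((l, dd), (C - Cplus B C b) \<union> Cminus B C b)"
proof -
  have wf_B: "wf_gra B" using assms(2) unfolding gura_def by simp
  interpret indistinguishable_data B C a b "accepts_from A (l, dd)" "{x. Some x \<in> range dd}"
  proof
    show "gura B" "ess_coverable B C" "a \<noteq> b" using assms(2,4,5) .
    show "a \<notin> {x. Some x \<in> range dd}" "b \<notin> {x. Some x \<in> range dd}"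
      using assms(8) unfolding indist_def by simp_all
    show "accepts_from A (l, dd) (rename_word \<pi> w)"
      if "inj \<pi>" "\<And>x. x \<in> {x. Some x \<in> range dd} \<Longrightarrow> \<pi> x = x" "accepts_from A (l, dd) w"
      for \<pi> w
      by (rule accepts_from_rename_fixing[OF that(1) _ that(3)]) (rule that(2), simp)
    show "finite {x. Some x \<in> range dd}"
      using finite_vimageI[of "range dd" Some] by (simp add: vimage_def)
    show "\<And>l v. (l, v) \<in> C \<Longrightarrow> l \<in> locs B"
      using assms(3) unfolding is_sync_def by auto
    show "\<And>l'. (l', Some a) \<in> C \<longleftrightarrow> (l', Some b) \<in> C"
      using assms(8) unfolding indist_def set_eq_iff by simp
  qed
  have "is_sync A B ((l, dd), C')"
    using assms(3) locs_C' unfolding is_sync_def by auto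
  then show ?thesis
    using reaches_bad_iff[OF assms(1) wf_B assms(3)] reaches_bad_iff[OF assms(1) wf_B]
      ex_witness_C_iff_C'
    unfolding witness_def C'_def by simp
qed

end
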